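(* For $n\in\mathbb{N}$, a triangular automorphism of index $n$ is the automorphism $T_n$ of $E$ with $T_n(e_j)=e_j$ for $j\ne n$ and $T_n(e_n)=-e_n+2P_n$, where $P_n\in E(e_1,\ldots,e_n)\cap E_{(1)}$. Fix $N\in\mathbb{N}$ and triangular automorphisms $T_1,\ldots,T_N$ (of indices $1,\ldots,N$) such that $P_j\in E(e_1,\ldots,e_N)\cap E_{(1)}$ for $j=1,\ldots,N$, and let $\tau_N=\langle T_1,\ldots,T_N\rangle\le\mathrm{Aut}(E)$. Then: (1) $\tau_N$ is abelian; (2) $\tau_N$ has order $2^N$; (3) every $\varphi\in\tau_N$ satisfies $\varphi^2=\mathrm{id}$, hence induces a $\mathbb{Z}_2$-grading $E_\varphi$ on $E$; (4) if $\varphi=T_{j_1}\circ\cdots\circ T_{j_s}$ with $j_1,\ldots,j_s$ pairwise distinct, then $E_\varphi$ is $\mathbb{Z}_2$-isomorphic to $E_{s^\ast}$.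
   Context: $F$ is a field of characteristic zero, $L$ an infinite-dimensional $F$-vector space with basis $e_1,e_2,\ldots$, $E$ its Grassmann algebra. $E_{(1)}$ is the span of the monomials $e_{i_1}\cdots e_{i_m}$ ($i_1<\cdots<i_m$) of odd length $m$. For $k\in\mathbb{N}$, $E(e_1,\ldots,e_k)$ is the span of all monomials having no factor among $e_1,\ldots,e_k$. $E_\varphi$ is the $\mathbb{Z}_2$-grading by the eigenspaces of $\varphi$ for $1$ (degree 0) and $-1$ (degree 1). $E_{s^\ast}$ is the grading in which $e_1,\ldots,e_s$ have degree $1$ and all other $e_i$ degree $0$. $\mathbb{Z}_2$-isomorphic means isomorphic via an algebra isomorphism preserving the degree components. *)

theory Defs
  imports "HOL-Algebra.Bij" "HOL-Algebra.Generated_Groups"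
begin

text \<open>The Grassmann algebra E over a field F of characteristic zero on generators
e_1, e_2, ... (indices are positive naturals).  An element is represented by its
coefficient function on monomials: a monomial e_{i_1}...e_{i_m} (i_1 < ... < i_m)
is represented by the finite set {i_1,...,i_m}.\<close>

type_synonym 'a grass = "nat set \<Rightarrow> 'a"

definition grass_carrier :: "('a::field_char_0) grass set" where
  "grass_carrier = {x. finite {S. x S \<noteq> 0} \<and> (\<forall>S. x S \<noteq> 0 \<longrightarrow> finite S \<and> 0 \<notin> S)}"

text \<open>Sign of the product e_S e_T for disjoint S, T (number of inversions).\<close>
definition gsign :: "nat set \<Rightarrow> nat set \<Rightarrow> 'a::field_char_0" where
  "gsign S T = (-1) ^ card {(i,j). i \<in> S \<and> j \<in> T \<and> j < i}"

definition gmult :: "('a::field_char_0) grass \<Rightarrow> 'a grass \<Rightarrow> 'a grass" where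
  "gmult x y = (\<lambda>U. if finite U then (\<Sum>S\<in>Pow U. gsign S (U - S) * x S * y (U - S)) else 0)"

definition gadd :: "('a::field_char_0) grass \<Rightarrow> 'a grass \<Rightarrow> 'a grass" where
  "gadd x y = (\<lambda>U. x U + y U)"

definition gsmult :: "'a::field_char_0 \<Rightarrow> 'a grass \<Rightarrow> 'a grass" where
  "gsmult c x = (\<lambda>U. c * x U)"

definition gen :: "nat \<Rightarrow> ('a::field_char_0) grass" where
  "gen i = (\<lambda>S. if S = {i} then 1 else 0)"

definition grass_aut :: "(('a::field_char_0) grass \<Rightarrow> 'a grass) \<Rightarrow> bool" where
  "grass_aut f \<longleftrightarrow> bij_betw f grass_carrier grass_carrier
     \<and> (\<forall>x\<in>grass_carrier. \<forall>y\<in>grass_carrier. f (gadd x y) = gadd (f x) (f y))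
     \<and> (\<forall>c. \<forall>x\<in>grass_carrier. f (gsmult c x) = gsmult c (f x))
     \<and> (\<forall>x\<in>grass_carrier. \<forall>y\<in>grass_carrier. f (gmult x y) = gmult (f x) (f y))"

definition grass_odd :: "('a::field_char_0) grass set" where
  "grass_odd = {x\<in>grass_carrier. \<forall>S. x S \<noteq> 0 \<longrightarrow> odd (card S)}"

definition grass_avoid :: "nat \<Rightarrow> ('a::field_char_0) grass set" where
  "grass_avoid k = {x\<in>grass_carrier. \<forall>S. x S \<noteq> 0 \<longrightarrow> S \<inter> {1..k} = {}}"

text \<open>T is the triangular automorphism of index n with respect to P
(as an element of the group of bijections of E, i.e. extensional on E).\<close>
definition triangular_aut :: "nat \<Rightarrow> (('a::field_char_0) grass \<Rightarrow> 'a grass) \<Rightarrow> 'a grass \<Rightarrow> bool" where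
  "triangular_aut n T P \<longleftrightarrow> 1 \<le> n \<and> T \<in> extensional grass_carrier \<and> grass_aut T
     \<and> P \<in> grass_avoid n \<inter> grass_odd
     \<and> (\<forall>j. 1 \<le> j \<and> j \<noteq> n \<longrightarrow> T (gen j) = gen j)
     \<and> T (gen n) = gadd (gsmult (-1) (gen n)) (gsmult 2 P)"

text \<open>tau_N = < T_1, ..., T_N > as a subgroup of the group of bijections of E
(equivalently of Aut(E)).\<close>
definition tau_group :: "(nat \<Rightarrow> ('a::field_char_0) grass \<Rightarrow> 'a grass) \<Rightarrow> nat \<Rightarrow> ('a grass \<Rightarrow> 'a grass) set" where
  "tau_group T N = generate (BijGroup grass_carrier) (T ` {1..N})"

definition comp_list :: "(nat \<Rightarrow> ('a::field_char_0) grass \<Rightarrow> 'a grass) \<Rightarrow> nat list \<Rightarrow> 'a grass \<Rightarrow> 'a grass" where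
  "comp_list T js = foldr (\<lambda>j f. compose grass_carrier (T j) f) js (\<lambda>x\<in>grass_carrier. x)"

definition phi_deg0 :: "(('a::field_char_0) grass \<Rightarrow> 'a grass) \<Rightarrow> 'a grass set" where
  "phi_deg0 \<phi> = {x\<in>grass_carrier. \<phi> x = x}"
definition phi_deg1 :: "(('a::field_char_0) grass \<Rightarrow> 'a grass) \<Rightarrow> 'a grass set" where
  "phi_deg1 \<phi> = {x\<in>grass_carrier. \<phi> x = gsmult (-1) x}"

definition sstar_deg0 :: "nat \<Rightarrow> ('a::field_char_0) grass set" where
  "sstar_deg0 s = {x\<in>grass_carrier. \<forall>S. x S \<noteq> 0 \<longrightarrow> even (card (S \<inter> {1..s}))}"
definition sstar_deg1 :: "nat \<Rightarrow> ('a::field_char_0) grass set" where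
  "sstar_deg1 s = {x\<in>grass_carrier. \<forall>S. x S \<noteq> 0 \<longrightarrow> odd (card (S \<inter> {1..s}))}"

definition z2_iso :: "('a::field_char_0) grass set \<Rightarrow> 'a grass set \<Rightarrow> 'a grass set \<Rightarrow> 'a grass set \<Rightarrow> bool" where
  "z2_iso A0 A1 B0 B1 \<longleftrightarrow> (\<exists>\<psi>. grass_aut \<psi> \<and> \<psi> ` A0 = B0 \<and> \<psi> ` A1 = B1)"

end

theory Submission
  imports Defs
begin

text \<open>Every element \<phi> of \<tau>_N is an automorphism of E that fixes the P_j (they involve only
  generators e_i with i > N) and, for some A \<subseteq> {1..N}, sends e_i to -e_i + 2 P_i for i \<in> A and
  fixes all other generators. An automorphism is determined by its values on the generators, so
  \<phi> \<mapsto> A is a bijection from \<tau>_N onto the subsets of {1..N} that turns composition into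
  symmetric difference; this gives commutativity, the order 2^N and \<phi> \<circ> \<phi> = id.
  If \<phi> flips A, the automorphism \<sigma> with e_i \<mapsto> e_i + P_i (i \<in> A) satisfies \<sigma> \<phi> = D \<sigma>, where D
  changes the sign of the e_i with i \<in> A. Following \<sigma> by the automorphism induced by a
  permutation of the generators carrying A onto {1..s} conjugates \<phi> to the automorphism whose
  eigenspaces form E_{s*}, and conjugate automorphisms have Z_2-isomorphic eigenspace gradings.\<close>

section \<open>Monomials\<close>

definition gmono :: "nat set \<Rightarrow> ('a::field_char_0) grass" where
  "gmono S = (\<lambda>U. if U = S then 1 else 0)"

lemma gen_eq_gmono: "gen i = gmono {i}"
  by (simp add: gen_def gmono_def)

lemma gmono_in_carrier: "finite S \<Longrightarrow> 0 \<notin> S \<Longrightarrow> gmono S \<in> grass_carrier"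
  by (simp add: grass_carrier_def gmono_def)

lemma gen_in_carrier: "1 \<le> i \<Longrightarrow> gen i \<in> grass_carrier"
  by (simp add: gen_eq_gmono gmono_in_carrier)

lemma gadd_in_carrier:
  assumes "x \<in> grass_carrier" "y \<in> grass_carrier"
  shows "gadd x y \<in> grass_carrier"
proof -
  have "{S. gadd x y S \<noteq> 0} \<subseteq> {S. x S \<noteq> 0} \<union> {S. y S \<noteq> 0}"
    by (auto simp: gadd_def)
  then show ?thesis
    using assms unfolding grass_carrier_def by (auto simp: gadd_def intro: finite_subset)
qed

lemma gsmult_in_carrier:
  assumes "x \<in> grass_carrier"
  shows "gsmult c x \<in> grass_carrier"
proof -
  have "{S. gsmult c x S \<noteq> 0} \<subseteq> {S. x S \<noteq> 0}"
    by (auto simp: gsmult_def)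
  then show ?thesis
    using assms unfolding grass_carrier_def by (auto simp: gsmult_def intro: finite_subset)
qed

lemma gmult_in_carrier:
  assumes x: "x \<in> grass_carrier" and y: "y \<in> grass_carrier"
  shows "gmult x y \<in> grass_carrier"
proof -
  have supp: "{U. gmult x y U \<noteq> 0} \<subseteq> (\<lambda>(S, S'). S \<union> S') ` ({S. x S \<noteq> 0} \<times> {S. y S \<noteq> 0})"
  proof
    fix U assume "U \<in> {U. gmult x y U \<noteq> 0}"
    then have "(\<Sum>S\<in>Pow U. gsign S (U - S) * x S * y (U - S)) \<noteq> 0"
      by (auto simp: gmult_def split: if_splits)
    then obtain S where "S \<in> Pow U" "gsign S (U - S) * x S * y (U - S) \<noteq> 0"
      using sum.not_neutral_contains_not_neutral by blast
    then show "U \<in> (\<lambda>(S, S'). S \<union> S') ` ({S. x S \<noteq> 0} \<times> {S. y S \<noteq> 0})"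
      by (intro image_eqI[of _ _ "(S, U - S)"]) auto
  qed
  have "finite U \<and> 0 \<notin> U" if "gmult x y U \<noteq> 0" for U
  proof -
    have "U \<in> (\<lambda>(S, S'). S \<union> S') ` ({S. x S \<noteq> 0} \<times> {S. y S \<noteq> 0})"
      using that supp by blast
    then show ?thesis
      using x y by (auto simp: grass_carrier_def)
  qed
  moreover have "finite {U. gmult x y U \<noteq> 0}"
    using x y by (intro finite_subset[OF supp]) (auto simp: grass_carrier_def)
  ultimately show ?thesis
    by (simp add: grass_carrier_def)
qed

lemma carrier_vanishes_infinite: "x \<in> grass_carrier \<Longrightarrow> infinite U \<Longrightarrow> x U = 0"
  by (auto simp: grass_carrier_def)

lemma carrier_support_pos:
  assumes "x \<in> grass_carrier" "x S \<noteq> 0" "i \<in> S"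
  shows "1 \<le> i"
proof -
  have "0 \<notin> S"
    using assms(1,2) by (simp add: grass_carrier_def)
  then show ?thesis
    using assms(3) by (cases i) auto
qed

lemma gsign_empty_left [simp]: "gsign {} T = 1"
  and gsign_empty_right [simp]: "gsign S {} = 1"
  by (simp_all add: gsign_def)

lemma gmult_one_left: "x \<in> grass_carrier \<Longrightarrow> gmult (gmono {}) x = x"
proof
  fix U assume x: "x \<in> grass_carrier"
  show "gmult (gmono {}) x U = x U"
  proof (cases "finite U")
    case True
    have "(\<Sum>S\<in>Pow U. gsign S (U - S) * gmono {} S * x (U - S)) =
          (\<Sum>S\<in>Pow U. if S = {} then x U else 0)"
      by (rule sum.cong) (auto simp: gmono_def)
    with True show ?thesis by (simp add: gmult_def)
  qed (simp add: gmult_def carrier_vanishes_infinite x)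
qed

lemma gmult_one_right: "x \<in> grass_carrier \<Longrightarrow> gmult x (gmono {}) = x"
proof
  fix U assume x: "x \<in> grass_carrier"
  show "gmult x (gmono {}) U = x U"
  proof (cases "finite U")
    case True
    have "(\<Sum>S\<in>Pow U. gsign S (U - S) * x S * gmono {} (U - S)) =
          (\<Sum>S\<in>Pow U. if S = U then x U else 0)"
      by (rule sum.cong) (auto simp: gmono_def)
    with True show ?thesis by (simp add: gmult_def)
  qed (simp add: gmult_def carrier_vanishes_infinite x)
qed

lemma gsign_singleton_less:
  assumes "\<forall>j\<in>S. i < j"
  shows "gsign {i} S = 1"
proof -
  have "{(a, b). a \<in> {i} \<and> b \<in> S \<and> b < a} = {}"
    using assms by auto
  then show ?thesis
    unfolding gsign_def by (metis card.empty power_0)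
qed

lemma gmult_gen_gmono:
  assumes "finite S" "\<forall>j\<in>S. i < j"
  shows "gmult (gen i) (gmono S) = gmono (insert i S)"
proof
  fix U
  have "i \<notin> S" using assms by blast
  show "gmult (gen i) (gmono S) U = gmono (insert i S) U"
  proof (cases "finite U")
    case True
    have "(\<Sum>S'\<in>Pow U. gsign S' (U - S') * gen i S' * gmono S (U - S')) =
          (\<Sum>S'\<in>Pow U. if S' = {i} then gsign {i} (U - {i}) * gmono S (U - {i}) else 0)"
      by (rule sum.cong) (auto simp: gen_def)
    also have "\<dots> = (if i \<in> U then gsign {i} (U - {i}) * gmono S (U - {i}) else 0)"
      using True by simp
    also have "\<dots> = gmono (insert i S) U"
      using True \<open>i \<notin> S\<close> gsign_singleton_less[OF assms(2)] by (auto simp: gmono_def insert_absorb)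
    finally show ?thesis using True by (simp add: gmult_def)
  next
    case False
    then show ?thesis using assms(1) by (auto simp: gmult_def gmono_def)
  qed
qed

section \<open>Algebra endomorphisms\<close>

definition ghom :: "(('a::field_char_0) grass \<Rightarrow> 'a grass) \<Rightarrow> bool" where
  "ghom f \<longleftrightarrow> (\<forall>x\<in>grass_carrier. f x \<in> grass_carrier)
     \<and> (\<forall>x\<in>grass_carrier. \<forall>y\<in>grass_carrier. f (gadd x y) = gadd (f x) (f y))
     \<and> (\<forall>c. \<forall>x\<in>grass_carrier. f (gsmult c x) = gsmult c (f x))
     \<and> (\<forall>x\<in>grass_carrier. \<forall>y\<in>grass_carrier. f (gmult x y) = gmult (f x) (f y))
     \<and> f (gmono {}) = gmono {}"

lemma ghomD:
  assumes "ghom f"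
  shows ghom_in_carrier: "\<And>x. x \<in> grass_carrier \<Longrightarrow> f x \<in> grass_carrier"
    and ghom_gadd: "\<And>x y. x \<in> grass_carrier \<Longrightarrow> y \<in> grass_carrier \<Longrightarrow> f (gadd x y) = gadd (f x) (f y)"
    and ghom_gsmult: "\<And>c x. x \<in> grass_carrier \<Longrightarrow> f (gsmult c x) = gsmult c (f x)"
    and ghom_gmult: "\<And>x y. x \<in> grass_carrier \<Longrightarrow> y \<in> grass_carrier \<Longrightarrow> f (gmult x y) = gmult (f x) (f y)"
    and ghom_one: "f (gmono {}) = gmono {}"
  using assms unfolding ghom_def by auto

lemma grass_aut_imp_ghom:
  assumes "grass_aut f"
  shows "ghom f"
proof -
  have bij: "bij_betw f grass_carrier grass_carrier"
    and mult: "\<And>x y. x \<in> grass_carrier \<Longrightarrow> y \<in> grass_carrier \<Longrightarrow> f (gmult x y) = gmult (f x) (f y)"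
    using assms by (simp_all add: grass_aut_def)
  have one: "gmono {} \<in> grass_carrier"
    by (simp add: gmono_in_carrier)
  then have f_one: "f (gmono {}) \<in> grass_carrier"
    using bij by (auto simp: bij_betw_def)
  obtain x where x: "x \<in> grass_carrier" "f x = gmono {}"
    using bij one by (metis bij_betw_imp_surj_on imageE)
  \<comment> \<open>Surjectivity gives f x = 1 for some x, and then 1 = f (1 * x) = f 1 * 1 = f 1.\<close>
  have "gmono {} = gmult (f (gmono {})) (f x)"
    using mult[OF one x(1)] gmult_one_left[OF x(1)] x(2) by simp
  also have "\<dots> = f (gmono {})"
    using x(2) gmult_one_right[OF f_one] by simp
  finally show ?thesis
    using assms bij unfolding ghom_def grass_aut_def bij_betw_def by auto
qed

lemma ghom_id: "ghom (\<lambda>x. x)"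
  by (simp add: ghom_def)

lemma ghom_comp: "ghom f \<Longrightarrow> ghom g \<Longrightarrow> ghom (f \<circ> g)"
  unfolding ghom_def comp_def
  by (simp add: gadd_in_carrier gsmult_in_carrier gmult_in_carrier)

lemma ghom_cong:
  assumes f: "ghom f" and eq: "\<And>x. x \<in> grass_carrier \<Longrightarrow> g x = f x"
  shows "ghom g"
  using f gmono_in_carrier[of "{}"] unfolding ghom_def
  by (simp add: eq gmono_in_carrier gadd_in_carrier gsmult_in_carrier gmult_in_carrier)

lemma ghom_zero:
  assumes "ghom f"
  shows "f (\<lambda>U. 0) = (\<lambda>U. 0)"
proof -
  have zero: "(\<lambda>U. 0) = gsmult 0 (gmono {})"
    by (simp add: gsmult_def)
  show ?thesis
    unfolding zero using ghom_gsmult[OF assms gmono_in_carrier[of "{}"], of 0] ghom_one[OF assms] by simp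
qed

lemma grass_aut_iff_ghom_bij:
  "grass_aut f \<longleftrightarrow> ghom f \<and> bij_betw f grass_carrier grass_carrier"
  using grass_aut_imp_ghom unfolding ghom_def grass_aut_def by auto

lemma grass_aut_comp: "grass_aut f \<Longrightarrow> grass_aut g \<Longrightarrow> grass_aut (f \<circ> g)"
  by (auto simp: grass_aut_iff_ghom_bij ghom_comp intro: bij_betw_trans)

lemma ghom_eq_on_gmono:
  assumes f: "ghom f" and g: "ghom g" and S: "finite S" "0 \<notin> S"
    and gen_eq: "\<And>i. i \<in> S \<Longrightarrow> f (gen i) = g (gen i)"
  shows "f (gmono S) = g (gmono S)"
  using S gen_eq
proof (induction S rule: finite_linorder_min_induct)
  case empty
  show ?case by (simp add: ghom_one[OF f] ghom_one[OF g])
next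
  case (insert i S)
  have mono: "gmono (insert i S) = gmult (gen i) (gmono S)"
    using insert.hyps by (simp add: gmult_gen_gmono)
  have carr: "gen i \<in> grass_carrier" "gmono S \<in> grass_carrier"
    using insert by (auto simp: gen_in_carrier gmono_in_carrier Suc_le_eq)
  have "f (gen i) = g (gen i)" "f (gmono S) = g (gmono S)"
    using insert by simp_all
  then show ?case
    unfolding mono ghom_gmult[OF f carr] ghom_gmult[OF g carr] by simp
qed

lemma ghom_eq_on_support:
  assumes f: "ghom f" and g: "ghom g"
    and gen_eq: "\<And>i. i \<in> B \<Longrightarrow> f (gen i) = g (gen i)"
    and x: "x \<in> grass_carrier" and supp: "\<And>S. x S \<noteq> 0 \<Longrightarrow> S \<subseteq> B"
  shows "f x = g x"
proof -
  define cut where "cut F = (\<lambda>U. if U \<in> F then x U else 0)" for F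
  have cut_in_carrier: "cut F \<in> grass_carrier" for F
  proof -
    have "{U. cut F U \<noteq> 0} \<subseteq> {U. x U \<noteq> 0}"
      by (auto simp: cut_def)
    then show ?thesis
      using x unfolding grass_carrier_def by (auto simp: cut_def intro: finite_subset)
  qed
  have cut_eq: "f (cut F) = g (cut F)" if "finite F" "F \<subseteq> {S. x S \<noteq> 0}" for F
    using that
  proof (induction F rule: finite_induct)
    case empty
    have "cut {} = (\<lambda>U. 0)" by (simp add: cut_def)
    then show ?case by (simp add: ghom_zero[OF f] ghom_zero[OF g])
  next
    case (insert S F)
    have xS: "x S \<noteq> 0" and IH: "f (cut F) = g (cut F)"
      using insert.prems insert.IH by auto
    have S: "finite S" "0 \<notin> S"
      using x xS unfolding grass_carrier_def by blast+
    have carr: "gsmult (x S) (gmono S) \<in> grass_carrier" "cut F \<in> grass_carrier" "gmono S \<in> grass_carrier"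
      using S by (simp_all add: gmono_in_carrier gsmult_in_carrier cut_in_carrier)
    have split: "cut (insert S F) = gadd (gsmult (x S) (gmono S)) (cut F)"
      using insert.hyps(2) by (auto simp: cut_def gadd_def gsmult_def gmono_def)
    have "f (gmono S) = g (gmono S)"
      using ghom_eq_on_gmono[OF f g S] gen_eq supp[OF xS] by blast
    with IH show ?case
      unfolding split ghom_gadd[OF f carr(1,2)] ghom_gadd[OF g carr(1,2)]
        ghom_gsmult[OF f carr(3)] ghom_gsmult[OF g carr(3)]
      by simp
  qed
  have fin: "finite {S. x S \<noteq> 0}"
    using x by (simp add: grass_carrier_def)
  have "cut {S. x S \<noteq> 0} = x"
    by (auto simp: cut_def)
  then show ?thesis
    using cut_eq[OF fin order_refl] by simp
qed

lemma ghom_eqI: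
  assumes f: "ghom f" and g: "ghom g" and gen_eq: "\<And>i. 1 \<le> i \<Longrightarrow> f (gen i) = g (gen i)"
    and x: "x \<in> grass_carrier"
  shows "f x = g x"
proof (rule ghom_eq_on_support[OF f g _ x])
  show "\<And>i. i \<in> {i. 1 \<le> i} \<Longrightarrow> f (gen i) = g (gen i)"
    using gen_eq by simp
  show "\<And>S. x S \<noteq> 0 \<Longrightarrow> S \<subseteq> {i. 1 \<le> i}"
    using carrier_support_pos[OF x] by blast
qed

lemma ghom_Bij_eqI:
  assumes "f \<in> Bij grass_carrier" "g \<in> Bij grass_carrier" "ghom f" "ghom g"
    and "\<And>i. 1 \<le> i \<Longrightarrow> f (gen i) = g (gen i)"
  shows "f = g"
proof (rule extensionalityI[of f grass_carrier g])
  show "f \<in> extensional grass_carrier" "g \<in> extensional grass_carrier"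
    using assms(1,2) by (simp_all add: Bij_def)
  show "\<And>x. x \<in> grass_carrier \<Longrightarrow> f x = g x"
    using ghom_eqI[OF assms(3-5)] .
qed

lemma bij_betw_image_Collect:
  assumes "bij_betw f A B"
  shows "f ` {x \<in> A. Q (f x)} = {y \<in> B. Q y}"
proof
  show "f ` {x \<in> A. Q (f x)} \<subseteq> {y \<in> B. Q y}"
    using bij_betw_imp_surj_on[OF assms] by blast
  show "{y \<in> B. Q y} \<subseteq> f ` {x \<in> A. Q (f x)}"
  proof
    fix y assume y: "y \<in> {y \<in> B. Q y}"
    then obtain x where "x \<in> A" "y = f x"
      using bij_betw_imp_surj_on[OF assms] by blast
    with y show "y \<in> f ` {x \<in> A. Q (f x)}" by blast
  qed
qed

lemma z2_iso_if_conjugate: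
  assumes \<psi>: "grass_aut \<psi>"
    and \<phi>: "\<And>x. x \<in> grass_carrier \<Longrightarrow> \<phi> x \<in> grass_carrier"
    and conj: "\<And>x. x \<in> grass_carrier \<Longrightarrow> \<psi> (\<phi> x) = D (\<psi> x)"
  shows "z2_iso (phi_deg0 \<phi>) (phi_deg1 \<phi>) (phi_deg0 D) (phi_deg1 D)"
proof -
  have bij: "bij_betw \<psi> grass_carrier grass_carrier"
    using \<psi> by (simp add: grass_aut_def)
  have eigen: "\<psi> ` {x \<in> grass_carrier. \<phi> x = c x} = {y \<in> grass_carrier. D y = c y}"
    if c_in: "\<And>x. x \<in> grass_carrier \<Longrightarrow> c x \<in> grass_carrier"
      and c_comm: "\<And>x. x \<in> grass_carrier \<Longrightarrow> \<psi> (c x) = c (\<psi> x)" for c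
  proof -
    have "\<phi> x = c x \<longleftrightarrow> D (\<psi> x) = c (\<psi> x)" if x: "x \<in> grass_carrier" for x
    proof -
      have "\<phi> x = c x \<longleftrightarrow> \<psi> (\<phi> x) = \<psi> (c x)"
        using inj_on_eq_iff[OF bij_betw_imp_inj_on[OF bij] \<phi>[OF x] c_in[OF x]] by simp
      then show ?thesis
        by (simp only: conj[OF x] c_comm[OF x])
    qed
    then have "{x \<in> grass_carrier. \<phi> x = c x} = {x \<in> grass_carrier. D (\<psi> x) = c (\<psi> x)}"
      by blast
    then show ?thesis
      using bij_betw_image_Collect[OF bij, of "\<lambda>y. D y = c y"] by simp
  qed
  have "\<psi> ` phi_deg0 \<phi> = phi_deg0 D"
    unfolding phi_deg0_def using eigen[of "\<lambda>x. x"] by simp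
  moreover have "\<psi> ` phi_deg1 \<phi> = phi_deg1 D"
    unfolding phi_deg1_def using \<psi> gsmult_in_carrier
    by (intro eigen) (simp_all add: grass_aut_def)
  ultimately show ?thesis
    using \<psi> unfolding z2_iso_def by blast
qed

section \<open>Diagonal automorphisms\<close>

definition diag :: "(nat \<Rightarrow> 'a) \<Rightarrow> ('a::field_char_0) grass \<Rightarrow> 'a grass" where
  "diag c x = (\<lambda>U. (\<Prod>i\<in>U. c i) * x U)"

lemma diag_gmult: "diag c (gmult x y) = gmult (diag c x) (diag c y)"
proof
  fix U
  show "diag c (gmult x y) U = gmult (diag c x) (diag c y) U"
  proof (cases "finite U")
    case True
    have "(\<Prod>i\<in>U. c i) = (\<Prod>i\<in>S. c i) * (\<Prod>i\<in>U - S. c i)" if "S \<subseteq> U" for S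
      using True that by (metis prod.subset_diff mult.commute)
    then have "(\<Prod>i\<in>U. c i) * (\<Sum>S\<in>Pow U. gsign S (U - S) * x S * y (U - S))
        = (\<Sum>S\<in>Pow U. gsign S (U - S) * ((\<Prod>i\<in>S. c i) * x S) * ((\<Prod>i\<in>U - S. c i) * y (U - S)))"
      unfolding sum_distrib_left by (intro sum.cong) (simp_all add: algebra_simps)
    with True show ?thesis
      by (simp add: diag_def gmult_def)
  qed (simp add: diag_def gmult_def)
qed

lemma grass_aut_diag:
  assumes c: "\<And>i. c i \<noteq> (0::'a::field_char_0)"
  shows "grass_aut (diag c)"
proof -
  have prod_nz: "(\<Prod>i\<in>U. c i) \<noteq> 0" for U
    using c by (cases "finite U") simp_all
  have supp: "{U. diag c x U \<noteq> 0} = {U. x U \<noteq> 0}" for x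
    by (simp add: diag_def prod_nz)
  have into: "diag c x \<in> grass_carrier" if "x \<in> grass_carrier" for x
    using that unfolding grass_carrier_def supp by (simp add: diag_def prod_nz)
  have "inj_on (diag c) grass_carrier"
  proof (rule inj_onI)
    fix x y assume "diag c x = diag c y"
    then show "x = y"
      by (simp add: diag_def fun_eq_iff prod_nz)
  qed
  moreover have "grass_carrier \<subseteq> diag c ` grass_carrier"
  proof
    fix y :: "'a grass" assume y: "y \<in> grass_carrier"
    define x where "x = (\<lambda>U. y U / (\<Prod>i\<in>U. c i))"
    have "diag c x = y"
      by (simp add: diag_def x_def prod_nz fun_eq_iff)
    moreover have "x \<in> grass_carrier"
      using y unfolding grass_carrier_def by (simp add: x_def prod_nz)
    ultimately show "y \<in> diag c ` grass_carrier" by blast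
  qed
  ultimately show ?thesis
    unfolding grass_aut_def bij_betw_def
    using into diag_gmult by (auto simp: diag_def gadd_def gsmult_def algebra_simps)
qed

lemma diag_gen: "diag c (gen i) = gsmult (c i) (gen i)"
  by (simp add: diag_def gen_def gsmult_def fun_eq_iff)

lemma diag_eq_self:
  assumes "\<And>S i. x S \<noteq> 0 \<Longrightarrow> i \<in> S \<Longrightarrow> c i = 1"
  shows "diag c x = x"
proof
  fix U
  show "diag c x U = x U"
  proof (cases "x U = 0")
    case False
    then have "(\<Prod>i\<in>U. c i) = 1"
      using assms by (intro prod.neutral) blast
    then show ?thesis by (simp add: diag_def)
  qed (simp add: diag_def)
qed

definition flip_sign :: "nat set \<Rightarrow> nat \<Rightarrow> 'a::field_char_0" where
  "flip_sign A i = (if i \<in> A then -1 else 1)"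

lemma grass_aut_diag_flip_sign: "grass_aut (diag (flip_sign A))"
  by (rule grass_aut_diag) (simp add: flip_sign_def)

lemma diag_flip_sign_apply:
  "finite U \<Longrightarrow> diag (flip_sign A) x U = (-1) ^ card (U \<inter> A) * x U"
  by (simp add: diag_def flip_sign_def prod.If_cases Int_def)

lemma diag_flip_sign_eq_iff:
  assumes "x \<in> grass_carrier"
  shows "diag (flip_sign A) x U = x U \<longleftrightarrow> (x U \<noteq> 0 \<longrightarrow> even (card (U \<inter> A)))"
    and "diag (flip_sign A) x U = - x U \<longleftrightarrow> (x U \<noteq> 0 \<longrightarrow> odd (card (U \<inter> A)))"
proof -
  have "(diag (flip_sign A) x U = x U \<longleftrightarrow> (x U \<noteq> 0 \<longrightarrow> even (card (U \<inter> A))))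
      \<and> (diag (flip_sign A) x U = - x U \<longleftrightarrow> (x U \<noteq> 0 \<longrightarrow> odd (card (U \<inter> A))))"
  proof (cases "finite U")
    case True
    then show ?thesis
      by (cases "even (card (U \<inter> A))") (simp_all add: diag_flip_sign_apply)
  qed (simp add: carrier_vanishes_infinite[OF assms] diag_def)
  then show "diag (flip_sign A) x U = x U \<longleftrightarrow> (x U \<noteq> 0 \<longrightarrow> even (card (U \<inter> A)))"
    and "diag (flip_sign A) x U = - x U \<longleftrightarrow> (x U \<noteq> 0 \<longrightarrow> odd (card (U \<inter> A)))"
    by simp_all
qed

lemma sstar_deg0_eq_phi_deg0: "sstar_deg0 s = phi_deg0 (diag (flip_sign {1..s}))"
  unfolding sstar_deg0_def phi_deg0_def
  by (intro Collect_cong conj_cong refl) (simp add: fun_eq_iff diag_flip_sign_eq_iff)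

lemma sstar_deg1_eq_phi_deg1: "sstar_deg1 s = phi_deg1 (diag (flip_sign {1..s}))"
  unfolding sstar_deg1_def phi_deg1_def gsmult_def
  by (intro Collect_cong conj_cong refl) (simp add: fun_eq_iff diag_flip_sign_eq_iff)

section \<open>Automorphisms induced by permutations of the generators\<close>

definition inversions :: "(nat \<Rightarrow> nat) \<Rightarrow> nat set \<Rightarrow> (nat \<times> nat) set" where
  "inversions p S = {(a, b). a \<in> S \<and> b \<in> S \<and> a < b \<and> p b < p a}"

definition inversion_sign :: "(nat \<Rightarrow> nat) \<Rightarrow> nat set \<Rightarrow> 'a::field_char_0" where
  "inversion_sign p S = (-1) ^ card (inversions p S)"

definition descents :: "(nat \<Rightarrow> nat) \<Rightarrow> nat set \<Rightarrow> nat set \<Rightarrow> (nat \<times> nat) set" where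
  "descents p S T = {(a, b). a \<in> S \<and> b \<in> T \<and> p b < p a}"

lemma gsign_image_eq_descents:
  assumes "inj p"
  shows "gsign (p ` S) (p ` T) = (-1) ^ card (descents p S T)"
proof -
  have "{(i, j). i \<in> p ` S \<and> j \<in> p ` T \<and> j < i} = map_prod p p ` descents p S T"
    by (auto simp: descents_def)
  moreover have "inj_on (map_prod p p) (descents p S T)"
    using map_prod_inj_on[OF assms assms] by (rule inj_on_subset) simp
  ultimately show ?thesis
    by (simp add: gsign_def card_image)
qed

text \<open>An inversion of p on S \<union> T between S and T is a pair of S \<times> T on which exactly one
  of the orders (by value, by p-value) descends.\<close>
lemma inversions_Un:
  assumes p: "inj p" and disj: "S \<inter> T = {}"
  defines "X \<equiv> descents p S T" and "Y \<equiv> descents id S T"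
  shows "inversions p (S \<union> T) = inversions p S \<union> inversions p T \<union> (X - Y) \<union> prod.swap ` (Y - X)"
proof (intro Set.set_eqI iffI)
  fix z assume "z \<in> inversions p (S \<union> T)"
  then obtain a b where z: "z = (a, b)" "a \<in> S \<union> T" "b \<in> S \<union> T" "a < b" "p b < p a"
    by (auto simp: inversions_def)
  then consider "a \<in> S" "b \<in> S" | "a \<in> T" "b \<in> T" | "a \<in> S" "b \<in> T" | "a \<in> T" "b \<in> S"
    by blast
  then show "z \<in> inversions p S \<union> inversions p T \<union> (X - Y) \<union> prod.swap ` (Y - X)"
  proof cases
    case 4
    then have "(b, a) \<in> Y - X"
      using z by (auto simp: X_def Y_def descents_def)
    then show ?thesis
      using z(1) by (auto intro: image_eqI[of _ _ "(b, a)"])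
  qed (use z in \<open>auto simp: inversions_def X_def Y_def descents_def\<close>)
next
  fix z assume "z \<in> inversions p S \<union> inversions p T \<union> (X - Y) \<union> prod.swap ` (Y - X)"
  moreover have "p a \<noteq> p b" if "a \<in> S" "b \<in> T" for a b
    using that disj injD[OF p] by blast
  ultimately show "z \<in> inversions p (S \<union> T)"
    using disj by (auto simp: inversions_def X_def Y_def descents_def)
qed

lemma card_inversions_Un:
  assumes p: "inj p" and fin: "finite S" "finite T" and disj: "S \<inter> T = {}"
  defines "X \<equiv> descents p S T" and "Y \<equiv> descents id S T"
  shows "card (inversions p (S \<union> T))
    = card (inversions p S) + card (inversions p T) + card (X - Y) + card (Y - X)"
proof -
  have "inversions p S \<subseteq> S \<times> S" "inversions p T \<subseteq> T \<times> T" "X \<subseteq> S \<times> T" "Y \<subseteq> S \<times> T"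
    by (auto simp: inversions_def X_def Y_def descents_def)
  then have fins: "finite (inversions p S)" "finite (inversions p T)" "finite X" "finite Y"
    using fin by (simp_all add: finite_subset)
  have "inversions p S \<inter> inversions p T = {}"
    using disj by (auto simp: inversions_def)
  moreover have "(inversions p S \<union> inversions p T) \<inter> (X - Y) = {}"
    using disj by (auto simp: inversions_def X_def descents_def)
  moreover have "(inversions p S \<union> inversions p T \<union> (X - Y)) \<inter> prod.swap ` (Y - X) = {}"
    using disj by (auto simp: inversions_def X_def Y_def descents_def)
  moreover have "card (prod.swap ` (Y - X)) = card (Y - X)"
    by (simp add: card_image)
  ultimately show ?thesis
    unfolding inversions_Un[OF p disj] X_def[symmetric] Y_def[symmetric]
    using fins by (simp add: card_Un_disjoint)
qed

lemma neg_one_power_card_sym_diff: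
  assumes "finite X" "finite Y"
  shows "(-1::'a::ring_1) ^ (card (X - Y) + card (Y - X)) = (-1) ^ card X * (-1) ^ card Y"
proof -
  have "card X + card Y = card (X - Y) + card (Y - X) + 2 * card (X \<inter> Y)"
    using card_Int_Diff[OF assms(1), of Y] card_Int_Diff[OF assms(2), of X]
    by (simp add: Int_commute)
  then have "(-1::'a) ^ card X * (-1) ^ card Y = (-1) ^ (card (X - Y) + card (Y - X) + 2 * card (X \<inter> Y))"
    by (simp flip: power_add)
  then show ?thesis
    by (simp add: power_add power_mult)
qed

lemma gsign_image_inversion_sign:
  assumes p: "inj p" and fin: "finite S" "finite T" and disj: "S \<inter> T = {}"
  shows "gsign (p ` S) (p ` T) * inversion_sign p S * inversion_sign p T
    = (inversion_sign p (S \<union> T) * gsign S T :: 'a::field_char_0)"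
proof -
  define X where "X = descents p S T"
  define Y where "Y = descents id S T"
  have "finite X" "finite Y"
    using fin by (auto simp: X_def Y_def descents_def intro: finite_subset[of _ "S \<times> T"])
  then have "inversion_sign p (S \<union> T)
      = inversion_sign p S * inversion_sign p T * (-1) ^ card X * ((-1) ^ card Y :: 'a)"
    unfolding inversion_sign_def card_inversions_Un[OF assms] X_def[symmetric] Y_def[symmetric]
    using neg_one_power_card_sym_diff[OF \<open>finite X\<close> \<open>finite Y\<close>, where 'a='a]
    by (simp add: power_add)
  moreover have "gsign (p ` S) (p ` T) = ((-1) ^ card X :: 'a)" "gsign S T = ((-1) ^ card Y :: 'a)"
    using gsign_image_eq_descents[OF p, of S T] gsign_image_eq_descents[of id S T]
    by (simp_all add: X_def Y_def)
  moreover have "(-1::'a) ^ card Y * (-1) ^ card Y = 1"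
    by (simp flip: power_mult_distrib)
  ultimately show ?thesis
    by (simp add: ac_simps)
qed

lemma Pow_image: "Pow (f ` A) = image f ` Pow A"
proof
  show "Pow (f ` A) \<subseteq> image f ` Pow A"
  proof
    fix B assume "B \<in> Pow (f ` A)"
    then obtain A' where "A' \<subseteq> A" "B = f ` A'"
      by (auto simp: subset_image_iff)
    then show "B \<in> image f ` Pow A"
      by blast
  qed
  show "image f ` Pow A \<subseteq> Pow (f ` A)"
    by auto
qed

text \<open>The automorphism induced by the permutation e_i \<mapsto> e_(p i) of the generators; the inversion
  sign accounts for reordering the factors of a monomial.\<close>
definition pmap :: "(nat \<Rightarrow> nat) \<Rightarrow> ('a::field_char_0) grass \<Rightarrow> 'a grass" where
  "pmap p x = (\<lambda>U. inversion_sign p (inv_into UNIV p ` U) * x (inv_into UNIV p ` U))"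

lemma inversion_sign_square: "inversion_sign p S * inversion_sign p S = (1::'a::field_char_0)"
  unfolding inversion_sign_def by (simp flip: power_mult_distrib)

context
  fixes p :: "nat \<Rightarrow> nat"
  assumes bij: "bij p" and p0: "p 0 = 0"
begin

lemma inv_image_image: "inv_into UNIV p ` p ` S = S"
  using bij by (simp add: image_inv_f_f bij_is_inj)

lemma image_inv_image: "p ` inv_into UNIV p ` S = S"
  using bij by (simp add: image_f_inv_f bij_is_surj)

lemma zero_notin_image: "0 \<notin> S \<Longrightarrow> 0 \<notin> p ` S"
  using p0 bij_is_inj[OF bij] by (auto dest: injD[of p _ 0])

lemma pmap_in_carrier:
  assumes x: "x \<in> grass_carrier"
  shows "pmap p x \<in> grass_carrier"
proof -
  have supp: "{U. pmap p x U \<noteq> 0} \<subseteq> image p ` {S. x S \<noteq> 0}"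
  proof
    fix U assume "U \<in> {U. pmap p x U \<noteq> 0}"
    then have "x (inv_into UNIV p ` U) \<noteq> 0" by (simp add: pmap_def)
    then show "U \<in> image p ` {S. x S \<noteq> 0}"
      by (intro image_eqI[of _ _ "inv_into UNIV p ` U"]) (simp_all add: image_inv_image)
  qed
  have "finite {U. pmap p x U \<noteq> 0}"
    using x by (intro finite_subset[OF supp]) (simp add: grass_carrier_def)
  moreover have "finite U \<and> 0 \<notin> U" if U: "pmap p x U \<noteq> 0" for U
  proof -
    obtain S where "U = p ` S" "x S \<noteq> 0"
      using supp U by blast
    then show ?thesis
      using x zero_notin_image by (simp add: grass_carrier_def)
  qed
  ultimately show ?thesis
    by (simp add: grass_carrier_def)
qed

lemma pmap_apply_image: "pmap p x (p ` S) = inversion_sign p S * x S"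
  by (simp add: pmap_def inv_image_image)

lemma pmap_surj:
  assumes y: "y \<in> grass_carrier"
  shows "\<exists>x\<in>grass_carrier. pmap p x = y"
proof
  define x where "x = (\<lambda>S. inversion_sign p S * y (p ` S))"
  show "pmap p x = y"
  proof
    fix U
    have "pmap p x U = (inversion_sign p (inv_into UNIV p ` U) * inversion_sign p (inv_into UNIV p ` U)) * y U"
      by (simp add: pmap_def x_def image_inv_image)
    then show "pmap p x U = y U"
      by (simp add: inversion_sign_square)
  qed
  have x_nz: "y (p ` S) \<noteq> 0" if "x S \<noteq> 0" for S
    using that by (simp add: x_def)
  have supp: "{S. x S \<noteq> 0} \<subseteq> image (inv_into UNIV p) ` {U. y U \<noteq> 0}"
  proof
    fix S assume "S \<in> {S. x S \<noteq> 0}"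
    then show "S \<in> image (inv_into UNIV p) ` {U. y U \<noteq> 0}"
      using x_nz by (intro image_eqI[of _ _ "p ` S"]) (simp_all add: inv_image_image)
  qed
  have "finite {S. x S \<noteq> 0}"
    using y by (intro finite_subset[OF supp]) (simp add: grass_carrier_def)
  moreover have "finite S \<and> 0 \<notin> S" if "x S \<noteq> 0" for S
  proof -
    have "finite (p ` S)" "0 \<notin> p ` S"
      using x_nz[OF that] y by (simp_all add: grass_carrier_def)
    moreover have "inj_on p S"
      using bij_is_inj[OF bij] by (rule inj_on_subset) simp
    ultimately show ?thesis
      using finite_imageD p0 by (metis image_eqI)
  qed
  ultimately show "x \<in> grass_carrier"
    by (simp add: grass_carrier_def)
qed

lemma pmap_gmult: "pmap p (gmult x y) = gmult (pmap p x) (pmap p y)"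
proof
  fix U
  define V where "V = inv_into UNIV p ` U"
  have U: "U = p ` V"
    by (simp add: V_def image_inv_image)
  have inj: "inj p"
    using bij by (rule bij_is_inj)
  show "pmap p (gmult x y) U = gmult (pmap p x) (pmap p y) U"
  proof (cases "finite U")
    case True
    then have fin: "finite V" by (simp add: V_def)
    have Pow_U: "Pow U = image p ` Pow V"
      unfolding U by (rule Pow_image)
    have inj_Pow: "inj_on (image p) (Pow V)"
      using inj by (auto simp: inj_on_def inj_image_eq_iff)
    have "gmult (pmap p x) (pmap p y) U
        = (\<Sum>S\<in>Pow V. gsign (p ` S) (U - p ` S) * pmap p x (p ` S) * pmap p y (U - p ` S))"
      using True by (simp add: gmult_def Pow_U sum.reindex[OF inj_Pow])
    also have "\<dots> = (\<Sum>S\<in>Pow V. inversion_sign p V * (gsign S (V - S) * x S * y (V - S)))"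
    proof (rule sum.cong)
      fix S assume S: "S \<in> Pow V"
      have diff: "U - p ` S = p ` (V - S)"
        unfolding U by (simp add: image_set_diff[OF inj])
      have "gsign (p ` S) (p ` (V - S)) * inversion_sign p S * inversion_sign p (V - S)
          = inversion_sign p V * (gsign S (V - S) :: 'a)"
        using gsign_image_inversion_sign[OF inj, of S "V - S"] S fin
        by (simp add: Un_absorb1 finite_subset)
      then show "gsign (p ` S) (U - p ` S) * pmap p x (p ` S) * pmap p y (U - p ` S)
          = inversion_sign p V * (gsign S (V - S) * x S * y (V - S))"
        unfolding diff pmap_apply_image by (simp add: ac_simps)
    qed simp
    also have "\<dots> = pmap p (gmult x y) U"
      using fin by (simp add: pmap_def gmult_def sum_distrib_left V_def)
    finally show ?thesis ..
  next
    case False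
    then have "infinite V"
      using U by auto
    with False show ?thesis
      by (simp add: pmap_def gmult_def V_def)
  qed
qed

lemma grass_aut_pmap: "grass_aut (pmap p :: ('a::field_char_0) grass \<Rightarrow> 'a grass)"
proof -
  have "inj_on (pmap p :: 'a grass \<Rightarrow> 'a grass) grass_carrier"
  proof (rule inj_onI)
    fix x y :: "'a grass" assume eq: "pmap p x = pmap p y"
    show "x = y"
    proof
      fix S
      have "inversion_sign p S * x S = inversion_sign p S * y S"
        using eq pmap_apply_image by metis
      then show "x S = y S"
        using inversion_sign_square[of p S, where 'a='a] by (metis mult_1 mult.assoc)
    qed
  qed
  moreover have "pmap p ` grass_carrier = (grass_carrier :: 'a grass set)"
    using pmap_in_carrier pmap_surj by blast
  moreover have "pmap p (gadd x y) = gadd (pmap p x) (pmap p y)"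
    and "pmap p (gsmult c x) = gsmult c (pmap p x)" for x y :: "'a grass" and c
    by (simp_all add: fun_eq_iff pmap_def gadd_def gsmult_def algebra_simps)
  ultimately show ?thesis
    unfolding grass_aut_def bij_betw_def by (simp add: pmap_gmult)
qed

lemma pmap_diag:
  assumes "\<And>i. c' (p i) = c i"
  shows "pmap p (diag c x) = diag c' (pmap p x)"
proof
  fix U
  have "(\<Prod>i\<in>inv_into UNIV p ` U. c i) = (\<Prod>i\<in>inv_into UNIV p ` U. c' (p i))"
    using assms by simp
  also have "\<dots> = (\<Prod>j\<in>U. c' j)"
    using prod.reindex[OF inj_on_subset[OF bij_is_inj[OF bij]], of "inv_into UNIV p ` U" c']
    by (simp add: image_inv_image)
  finally show "pmap p (diag c x) U = diag c' (pmap p x) U"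
    by (simp add: pmap_def diag_def)
qed

end

lemma exists_perm_onto_initial_segment:
  fixes A :: "nat set"
  assumes A: "A \<subseteq> {1..N}"
  shows "\<exists>p. bij p \<and> p 0 = 0 \<and> p ` A = {1..card A}"
proof -
  define s where "s = card A"
  have fin: "finite A"
    by (rule finite_subset[OF A]) simp
  have s: "s \<le> N"
    using card_mono[OF _ A] by (simp add: s_def)
  have "\<exists>h. bij_betw h A {1..s}"
    by (rule finite_same_card_bij[OF fin]) (simp_all add: s_def)
  then obtain h where h: "bij_betw h A {1..s}" ..
  have "card ({1..N} - A) = card ({1..N} - {1..s})"
    using A s by (simp add: card_Diff_subset fin s_def)
  then have "\<exists>g. bij_betw g ({1..N} - A) ({1..N} - {1..s})"
    by (rule finite_same_card_bij[rotated 2]) simp_all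
  then obtain g where g: "bij_betw g ({1..N} - A) ({1..N} - {1..s})" ..
  define p where "p = (\<lambda>i. if i \<in> A then h i else if i \<in> {1..N} then g i else i)"
  have p_A: "bij_betw p A {1..s}"
    using h by (rule bij_betw_cong[THEN iffD1, rotated]) (simp add: p_def)
  have p_rest: "bij_betw p ({1..N} - A) ({1..N} - {1..s})"
    using g by (rule bij_betw_cong[THEN iffD1, rotated]) (simp add: p_def)
  have p_out: "bij_betw p (- {1..N}) (- {1..N})"
    by (rule bij_betw_cong[THEN iffD1, rotated, OF bij_betw_id]) (use A in \<open>auto simp: p_def\<close>)
  have "bij_betw p (A \<union> ({1..N} - A)) ({1..s} \<union> ({1..N} - {1..s}))"
    by (rule bij_betw_combine[OF p_A p_rest]) auto
  then have "bij_betw p (A \<union> ({1..N} - A) \<union> - {1..N}) ({1..s} \<union> ({1..N} - {1..s}) \<union> - {1..N})"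
    by (rule bij_betw_combine[OF _ p_out]) (use s in auto)
  moreover have "A \<union> ({1..N} - A) \<union> - {1..N} = UNIV" by auto
  moreover have "{1..s} \<union> ({1..N} - {1..s}) \<union> - {1..N} = UNIV" by auto
  ultimately have "bij p" by simp
  moreover have "p 0 = 0"
    using A by (auto simp: p_def)
  moreover have "p ` A = {1..s}"
    using p_A by (simp add: bij_betw_def)
  ultimately show ?thesis
    unfolding s_def by blast
qed

section \<open>The group generated by the triangular automorphisms\<close>

definition flip_gen :: "(nat \<Rightarrow> ('a::field_char_0) grass) \<Rightarrow> nat \<Rightarrow> 'a grass" where
  "flip_gen P j = gadd (gsmult (-1) (gen j)) (gsmult 2 (P j))"

definition flips :: "(nat \<Rightarrow> ('a::field_char_0) grass) \<Rightarrow> ('a grass \<Rightarrow> 'a grass) \<Rightarrow> nat set \<Rightarrow> bool" where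
  "flips P \<phi> A \<longleftrightarrow> (\<forall>i\<ge>1. \<phi> (gen i) = (if i \<in> A then flip_gen P i else gen i))"

definition flip_group :: "(nat \<Rightarrow> ('a::field_char_0) grass) \<Rightarrow> nat \<Rightarrow> ('a grass \<Rightarrow> 'a grass) set" where
  "flip_group P N = {\<phi> \<in> Bij grass_carrier. ghom \<phi> \<and> (\<exists>A \<subseteq> {1..N}. flips P \<phi> A)}"

text \<open>For \<phi> flipping A this is the automorphism e_i \<mapsto> e_i + P_i (i \<in> A): the scalings by 1/2 and
  -2 turn -e_i + 2 P_i into e_i + P_i, P_i being fixed. Building it from \<phi> avoids constructing an
  automorphism of E from prescribed images of the generators.\<close>
definition shear :: "(('a::field_char_0) grass \<Rightarrow> 'a grass) \<Rightarrow> nat set \<Rightarrow> 'a grass \<Rightarrow> 'a grass" where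
  "shear \<phi> A = diag (\<lambda>i. if i \<in> A then -2 else 1) \<circ> \<phi> \<circ> diag (\<lambda>i. if i \<in> A then 1/2 else 1)"

locale triangular_family =
  fixes T :: "nat \<Rightarrow> ('a::field_char_0) grass \<Rightarrow> 'a grass" and P :: "nat \<Rightarrow> 'a grass" and N :: nat
  assumes triangular: "\<And>j. j \<in> {1..N} \<Longrightarrow> triangular_aut j (T j) (P j)"
    and P_avoid: "\<And>j. j \<in> {1..N} \<Longrightarrow> P j \<in> grass_avoid N"
begin

lemma P_in_carrier: "j \<in> {1..N} \<Longrightarrow> P j \<in> grass_carrier"
  using P_avoid by (simp add: grass_avoid_def)

lemma P_support_above:
  assumes j: "j \<in> {1..N}" and S: "P j S \<noteq> 0" and i: "i \<in> S"
  shows "N < i"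
proof -
  have "S \<inter> {1..N} = {}"
    using P_avoid[OF j] S by (simp add: grass_avoid_def)
  moreover have "1 \<le> i"
    using carrier_support_pos[OF P_in_carrier[OF j] S i] .
  ultimately show ?thesis
    using i by (cases "i \<le> N") auto
qed

lemma flip_gen_in_carrier: "j \<in> {1..N} \<Longrightarrow> flip_gen P j \<in> grass_carrier"
  unfolding flip_gen_def
  by (intro gadd_in_carrier gsmult_in_carrier gen_in_carrier P_in_carrier) simp_all

lemma flip_gen_neq_gen:
  assumes j: "j \<in> {1..N}"
  shows "flip_gen P j \<noteq> gen j"
proof -
  have "P j {j} = 0"
    using P_support_above[OF j, of "{j}" j] j by auto
  then have "flip_gen P j {j} = -1"
    by (simp add: flip_gen_def gadd_def gsmult_def gen_def)
  then show ?thesis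
    by (auto simp: gen_def)
qed

lemma ghom_fixes_P:
  assumes \<phi>: "ghom \<phi>" and gen_fixed: "\<And>i. N < i \<Longrightarrow> \<phi> (gen i) = gen i" and j: "j \<in> {1..N}"
  shows "\<phi> (P j) = P j"
proof (rule ghom_eq_on_support[OF \<phi> ghom_id _ P_in_carrier[OF j]])
  show "\<And>i. i \<in> {i. N < i} \<Longrightarrow> \<phi> (gen i) = gen i"
    using gen_fixed by simp
  show "\<And>S. P j S \<noteq> 0 \<Longrightarrow> S \<subseteq> {i. N < i}"
    using P_support_above[OF j] by blast
qed

lemma diag_fixes_P:
  assumes c: "\<And>i. N < i \<Longrightarrow> c i = 1" and j: "j \<in> {1..N}"
  shows "diag c (P j) = P j"
proof (rule diag_eq_self)
  show "\<And>S i. P j S \<noteq> 0 \<Longrightarrow> i \<in> S \<Longrightarrow> c i = 1"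
    using c P_support_above[OF j] by blast
qed

lemma ghom_flip_gen:
  assumes \<phi>: "ghom \<phi>" and j: "j \<in> {1..N}" and P_fixed: "\<phi> (P j) = P j"
  shows "\<phi> (flip_gen P j) = gadd (gsmult (-1) (\<phi> (gen j))) (gsmult 2 (P j))"
proof -
  have carr: "gen j \<in> grass_carrier" "P j \<in> grass_carrier"
    using j by (simp_all add: gen_in_carrier P_in_carrier)
  show ?thesis
    unfolding flip_gen_def ghom_gadd[OF \<phi> gsmult_in_carrier[OF carr(1)] gsmult_in_carrier[OF carr(2)]]
      ghom_gsmult[OF \<phi> carr(1)] ghom_gsmult[OF \<phi> carr(2)] P_fixed ..
qed


lemma flips_fixes_large:
  assumes "flips P \<phi> A" "A \<subseteq> {1..N}" "N < i"
  shows "\<phi> (gen i) = gen i"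
proof -
  have "1 \<le> i" "i \<notin> A"
    using assms(2,3) by auto
  then show ?thesis
    using assms(1) by (simp add: flips_def)
qed

lemma flips_fixes_P:
  assumes "ghom \<phi>" "flips P \<phi> A" "A \<subseteq> {1..N}" "j \<in> {1..N}"
  shows "\<phi> (P j) = P j"
  using assms flips_fixes_large by (intro ghom_fixes_P) blast+

lemma flip_gen_involutive: "gadd (gsmult (-1) (flip_gen P j)) (gsmult 2 (P j)) = gen j"
  by (simp add: fun_eq_iff flip_gen_def gadd_def gsmult_def)

lemma flips_compose:
  assumes \<phi>: "ghom \<phi>" "flips P \<phi> A" "A \<subseteq> {1..N}" and \<psi>: "flips P \<psi> B" "B \<subseteq> {1..N}"
  shows "flips P (compose grass_carrier \<phi> \<psi>) (sym_diff A B)"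
  unfolding flips_def
proof (intro allI impI)
  fix i :: nat assume i: "1 \<le> i"
  have comp: "compose grass_carrier \<phi> \<psi> (gen i) = \<phi> (\<psi> (gen i))"
    using gen_in_carrier[OF i] by (rule compose_eq)
  have \<phi>_gen: "\<phi> (gen i) = (if i \<in> A then flip_gen P i else gen i)"
    using \<phi>(2) i by (simp add: flips_def)
  show "compose grass_carrier \<phi> \<psi> (gen i) = (if i \<in> sym_diff A B then flip_gen P i else gen i)"
  proof (cases "i \<in> B")
    case True
    then have iN: "i \<in> {1..N}"
      using \<psi>(2) by blast
    have "\<phi> (flip_gen P i) = gadd (gsmult (-1) (\<phi> (gen i))) (gsmult 2 (P i))"
      using ghom_flip_gen[OF \<phi>(1) iN flips_fixes_P[OF \<phi> iN]] .
    moreover have "\<psi> (gen i) = flip_gen P i"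
      using \<psi>(1) i True by (simp add: flips_def)
    ultimately show ?thesis
      using comp \<phi>_gen True flip_gen_involutive by (simp add: flip_gen_def)
  next
    case False
    then have "\<psi> (gen i) = gen i"
      using \<psi>(1) i by (simp add: flips_def)
    then show ?thesis
      using comp \<phi>_gen False by simp
  qed
qed

lemma flip_group_memI:
  "\<phi> \<in> Bij grass_carrier \<Longrightarrow> ghom \<phi> \<Longrightarrow> flips P \<phi> A \<Longrightarrow> A \<subseteq> {1..N} \<Longrightarrow> \<phi> \<in> flip_group P N"
  unfolding flip_group_def by blast

lemma flip_group_memE:
  assumes "\<phi> \<in> flip_group P N"
  obtains A where "\<phi> \<in> Bij grass_carrier" "ghom \<phi>" "flips P \<phi> A" "A \<subseteq> {1..N}"
  using assms unfolding flip_group_def by blast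

lemma T_in_flip_group:
  assumes j: "j \<in> {1..N}"
  shows "T j \<in> flip_group P N" and "flips P (T j) {j}"
proof -
  have tri: "triangular_aut j (T j) (P j)"
    using triangular[OF j] .
  then show "flips P (T j) {j}"
    by (simp add: triangular_aut_def flips_def flip_gen_def)
  moreover have "T j \<in> Bij grass_carrier" "ghom (T j)"
    using tri by (simp_all add: triangular_aut_def Bij_def grass_aut_def grass_aut_imp_ghom)
  ultimately show "T j \<in> flip_group P N"
    using j by (intro flip_group_memI[of _ "{j}"]) simp_all
qed

lemma id_in_flip_group:
  shows "(\<lambda>x\<in>grass_carrier. x) \<in> flip_group P N" and "flips P (\<lambda>x\<in>grass_carrier. x) {}"
proof -
  show "flips P (\<lambda>x\<in>grass_carrier. x) {}"
    by (simp add: flips_def gen_in_carrier)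
  moreover have "ghom (\<lambda>x\<in>grass_carrier. x)"
    by (rule ghom_cong[OF ghom_id]) simp
  ultimately show "(\<lambda>x\<in>grass_carrier. x) \<in> flip_group P N"
    by (intro flip_group_memI[of _ "{}"] id_Bij) simp_all
qed

lemma flip_group_compose:
  assumes \<phi>: "\<phi> \<in> flip_group P N" "flips P \<phi> A" "A \<subseteq> {1..N}"
    and \<psi>: "\<psi> \<in> flip_group P N" "flips P \<psi> B" "B \<subseteq> {1..N}"
  shows "compose grass_carrier \<phi> \<psi> \<in> flip_group P N"
    and "flips P (compose grass_carrier \<phi> \<psi>) (sym_diff A B)"
proof -
  have hom: "ghom \<phi>" "ghom \<psi>" and bij: "\<phi> \<in> Bij grass_carrier" "\<psi> \<in> Bij grass_carrier"
    using \<phi>(1) \<psi>(1) by (auto elim: flip_group_memE)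
  show flips: "flips P (compose grass_carrier \<phi> \<psi>) (sym_diff A B)"
    using flips_compose[OF hom(1) \<phi>(2,3) \<psi>(2,3)] .
  have "ghom (compose grass_carrier \<phi> \<psi>)"
    by (rule ghom_cong[OF ghom_comp[OF hom]]) (simp add: compose_eq)
  then show "compose grass_carrier \<phi> \<psi> \<in> flip_group P N"
    using flips \<phi>(3) \<psi>(3) compose_Bij[OF bij] by (intro flip_group_memI[of _ "sym_diff A B"]) auto
qed

lemma flip_group_eqI:
  assumes "\<phi> \<in> flip_group P N" "\<psi> \<in> flip_group P N" "flips P \<phi> A" "flips P \<psi> A"
  shows "\<phi> = \<psi>"
proof (rule ghom_Bij_eqI)
  show "\<phi> \<in> Bij grass_carrier" "\<psi> \<in> Bij grass_carrier" "ghom \<phi>" "ghom \<psi>"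
    using assms(1,2) by (auto elim: flip_group_memE)
  show "\<And>i. 1 \<le> i \<Longrightarrow> \<phi> (gen i) = \<psi> (gen i)"
    using assms(3,4) by (simp add: flips_def)
qed

lemma flips_unique:
  assumes "flips P \<phi> A" "A \<subseteq> {1..N}"
  shows "{i \<in> {1..N}. \<phi> (gen i) \<noteq> gen i} = A"
  using assms flip_gen_neq_gen by (auto simp: flips_def)

lemma flip_group_square:
  assumes "\<phi> \<in> flip_group P N"
  shows "compose grass_carrier \<phi> \<phi> = (\<lambda>x\<in>grass_carrier. x)"
proof -
  obtain A where A: "flips P \<phi> A" "A \<subseteq> {1..N}"
    using assms by (auto elim: flip_group_memE)
  show ?thesis
    using flip_group_compose[OF assms A assms A] id_in_flip_group by (auto intro: flip_group_eqI)
qed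

lemma flip_group_commute:
  assumes "\<phi> \<in> flip_group P N" "\<psi> \<in> flip_group P N"
  shows "compose grass_carrier \<phi> \<psi> = compose grass_carrier \<psi> \<phi>"
proof -
  obtain A B where A: "flips P \<phi> A" "A \<subseteq> {1..N}" and B: "flips P \<psi> B" "B \<subseteq> {1..N}"
    using assms by (metis flip_group_memE)
  have "sym_diff A B = sym_diff B A"
    by blast
  then show ?thesis
    using flip_group_compose[OF assms(1) A assms(2) B] flip_group_compose[OF assms(2) B assms(1) A]
    by (metis flip_group_eqI)
qed


lemma tau_group_subset_flip_group: "tau_group T N \<subseteq> flip_group P N"
proof
  fix \<phi> assume "\<phi> \<in> tau_group T N"
  then show "\<phi> \<in> flip_group P N"
    unfolding tau_group_def
  proof (induction rule: generate.induct)
    case one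
    then show ?case
      using id_in_flip_group by (simp add: BijGroup_def restrict_def)
  next
    case (incl \<phi>)
    then show ?case
      using T_in_flip_group by blast
  next
    case (inv \<phi>)
    then obtain j where j: "j \<in> {1..N}" "\<phi> = T j" by blast
    then have \<phi>: "\<phi> \<in> flip_group P N" "\<phi> \<in> carrier (BijGroup grass_carrier)"
      using T_in_flip_group(1)[OF j(1)] by (auto simp: BijGroup_def elim: flip_group_memE)
    then have "\<phi> \<otimes>\<^bsub>BijGroup grass_carrier\<^esub> \<phi> = \<one>\<^bsub>BijGroup grass_carrier\<^esub>"
      using flip_group_square by (simp add: BijGroup_def)
    then have "inv\<^bsub>BijGroup grass_carrier\<^esub> \<phi> = \<phi>"
      using group.inv_equality[OF group_BijGroup] \<phi>(2) by blast
    with \<phi>(1) show ?case by simp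
  next
    case (eng \<phi> \<psi>)
    then obtain A B where "flips P \<phi> A" "A \<subseteq> {1..N}" "flips P \<psi> B" "B \<subseteq> {1..N}"
      by (metis flip_group_memE)
    then show ?case
      using eng flip_group_compose(1) by (auto simp: BijGroup_def elim: flip_group_memE)
  qed
qed

lemma tau_group_flips_every_subset:
  assumes "A \<subseteq> {1..N}"
  shows "\<exists>\<phi>\<in>tau_group T N. flips P \<phi> A"
proof -
  have "finite A"
    using assms by (rule finite_subset) simp
  then show ?thesis
    using assms
  proof (induction A rule: finite_induct)
    case empty
    have "\<one>\<^bsub>BijGroup grass_carrier\<^esub> \<in> tau_group T N"
      unfolding tau_group_def by (rule generate.one)
    then show ?case
      using id_in_flip_group(2) by (auto simp: BijGroup_def)
  next
    case (insert j A)
    then obtain \<phi> where \<phi>: "\<phi> \<in> tau_group T N" "flips P \<phi> A"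
      by auto
    have j: "j \<in> {1..N}" and A: "A \<subseteq> {1..N}"
      using insert.prems by auto
    have "T j \<otimes>\<^bsub>BijGroup grass_carrier\<^esub> \<phi> \<in> tau_group T N"
      using j \<phi>(1) unfolding tau_group_def by (intro generate.eng[OF generate.incl]) auto
    moreover have "T j \<otimes>\<^bsub>BijGroup grass_carrier\<^esub> \<phi> = compose grass_carrier (T j) \<phi>"
      using T_in_flip_group(1)[OF j] tau_group_subset_flip_group \<phi>(1)
      by (auto simp: BijGroup_def elim!: flip_group_memE)
    moreover have "flips P (compose grass_carrier (T j) \<phi>) (sym_diff {j} A)"
      using flip_group_compose(2)[OF T_in_flip_group[OF j] _ _ \<phi>(2) A] j
        tau_group_subset_flip_group \<phi>(1) by auto
    moreover have "sym_diff {j} A = insert j A"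
      using insert.hyps(2) by blast
    ultimately show ?case
      by metis
  qed
qed

lemma card_tau_group: "card (tau_group T N) = 2 ^ N"
proof -
  define flipped where "flipped \<phi> = {i \<in> {1..N}. \<phi> (gen i) \<noteq> gen i}" for \<phi> :: "'a grass \<Rightarrow> 'a grass"
  have flipped: "flipped \<phi> = A" if "flips P \<phi> A" "A \<subseteq> {1..N}" for \<phi> A
    using flips_unique[OF that] by (simp add: flipped_def)
  have "inj_on flipped (tau_group T N)"
  proof (rule inj_onI)
    fix \<phi> \<psi> assume \<phi>\<psi>: "\<phi> \<in> tau_group T N" "\<psi> \<in> tau_group T N" "flipped \<phi> = flipped \<psi>"
    then have in_group: "\<phi> \<in> flip_group P N" "\<psi> \<in> flip_group P N"
      using tau_group_subset_flip_group by auto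
    then obtain A B where "flips P \<phi> A" "A \<subseteq> {1..N}" "flips P \<psi> B" "B \<subseteq> {1..N}"
      by (metis flip_group_memE)
    then show "\<phi> = \<psi>"
      using flip_group_eqI[OF in_group] flipped \<phi>\<psi>(3) by metis
  qed
  moreover have "flipped ` tau_group T N = Pow {1..N}"
  proof
    show "flipped ` tau_group T N \<subseteq> Pow {1..N}"
      by (auto simp: flipped_def)
    show "Pow {1..N} \<subseteq> flipped ` tau_group T N"
      using tau_group_flips_every_subset flipped by blast
  qed
  ultimately have "card (tau_group T N) = card (Pow {1..N})"
    by (metis card_image)
  then show ?thesis
    by (simp add: card_Pow)
qed

lemma comp_list_flips:
  assumes "distinct js" "set js \<subseteq> {1..N}"
  shows "comp_list T js \<in> flip_group P N \<and> flips P (comp_list T js) (set js)"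
  using assms
proof (induction js)
  case Nil
  then show ?case
    using id_in_flip_group by (simp add: comp_list_def restrict_def)
next
  case (Cons j js)
  then have IH: "comp_list T js \<in> flip_group P N" "flips P (comp_list T js) (set js)"
    and j: "j \<in> {1..N}" "j \<notin> set js" and js: "set js \<subseteq> {1..N}"
    by auto
  have comp: "comp_list T (j # js) = compose grass_carrier (T j) (comp_list T js)"
    by (simp add: comp_list_def)
  have "sym_diff {j} (set js) = set (j # js)"
    using j(2) by auto
  then show ?case
    unfolding comp using flip_group_compose[OF T_in_flip_group[OF j(1)] _ IH js] j(1) by simp
qed


section \<open>Gradings induced by the elements of the group\<close>

context
  fixes \<phi> A
  assumes \<phi>: "\<phi> \<in> flip_group P N" and flips: "flips P \<phi> A" and A: "A \<subseteq> {1..N}"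
begin

lemma grass_aut_shear: "grass_aut (shear \<phi> A)"
proof -
  have "grass_aut \<phi>"
    using \<phi> by (auto simp: grass_aut_iff_ghom_bij Bij_def elim: flip_group_memE)
  then show ?thesis
    unfolding shear_def by (intro grass_aut_comp grass_aut_diag) simp_all
qed

lemma ghom_shear: "ghom (shear \<phi> A)"
  using grass_aut_shear by (rule grass_aut_imp_ghom)

lemma shear_fixes_P:
  assumes j: "j \<in> {1..N}"
  shows "shear \<phi> A (P j) = P j"
proof -
  have large_notin_A: "i \<notin> A" if "N < i" for i
    using A that by auto
  have "ghom \<phi>"
    using \<phi> by (auto elim: flip_group_memE)
  then show ?thesis
    unfolding shear_def comp_def
    using large_notin_A j by (simp add: diag_fixes_P flips_fixes_P[OF _ flips A])
qed

lemma shear_gen: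
  assumes i: "1 \<le> i"
  shows "shear \<phi> A (gen i) = (if i \<in> A then gadd (gen i) (P i) else gen i)"
proof -
  define c where "c = (\<lambda>i. if i \<in> A then -2 else (1::'a))"
  have hom: "ghom \<phi>" "ghom (diag c)"
    using \<phi> grass_aut_imp_ghom[OF grass_aut_diag[of c]]
    by (auto simp: c_def elim: flip_group_memE)
  have gi: "gen i \<in> grass_carrier"
    using i by (rule gen_in_carrier)
  show ?thesis
  proof (cases "i \<in> A")
    case True
    then have iN: "i \<in> {1..N}"
      using A by blast
    have "diag c (P i) = P i"
      using A iN by (intro diag_fixes_P) (auto simp: c_def)
    then have "diag c (flip_gen P i) = gadd (gsmult (-1) (gsmult (-2) (gen i))) (gsmult 2 (P i))"
      using ghom_flip_gen[OF hom(2) iN] True by (simp add: diag_gen c_def)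
    moreover have "\<phi> (gen i) = flip_gen P i"
      using flips i True by (simp add: flips_def)
    ultimately have "shear \<phi> A (gen i) = gsmult (1/2) (gadd (gsmult (-1) (gsmult (-2) (gen i))) (gsmult 2 (P i)))"
      using True ghom_gsmult[OF hom(1) gi] ghom_gsmult[OF hom(2) flip_gen_in_carrier[OF iN]]
      by (simp add: shear_def diag_gen c_def)
    also have "\<dots> = gadd (gen i) (P i)"
      by (simp add: fun_eq_iff gadd_def gsmult_def algebra_simps)
    finally show ?thesis
      using True by simp
  next
    case False
    then have "\<phi> (gen i) = gen i"
      using flips i by (simp add: flips_def)
    with False show ?thesis
      by (simp add: shear_def diag_gen gsmult_def)
  qed
qed

lemma shear_conj:
  assumes x: "x \<in> grass_carrier"
  shows "shear \<phi> A (\<phi> x) = diag (flip_sign A) (shear \<phi> A x)"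
proof -
  have hom: "ghom \<phi>" "ghom (diag (flip_sign A))"
    using \<phi> grass_aut_diag_flip_sign by (auto intro: grass_aut_imp_ghom elim: flip_group_memE)
  have "(shear \<phi> A \<circ> \<phi>) x = (diag (flip_sign A) \<circ> shear \<phi> A) x"
  proof (rule ghom_eqI[OF ghom_comp[OF ghom_shear hom(1)] ghom_comp[OF hom(2) ghom_shear] _ x])
    fix i :: nat assume i: "1 \<le> i"
    show "(shear \<phi> A \<circ> \<phi>) (gen i) = (diag (flip_sign A) \<circ> shear \<phi> A) (gen i)"
    proof (cases "i \<in> A")
      case True
      then have iN: "i \<in> {1..N}"
        using A by blast
      have "\<phi> (gen i) = flip_gen P i"
        using flips i True by (simp add: flips_def)
      then have lhs: "shear \<phi> A (\<phi> (gen i)) = gadd (gsmult (-1) (gadd (gen i) (P i))) (gsmult 2 (P i))"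
        using ghom_flip_gen[OF ghom_shear iN shear_fixes_P[OF iN]] shear_gen[OF i] True by simp
      have "diag (flip_sign A) (P i) = P i"
        using A iN by (intro diag_fixes_P) (auto simp: flip_sign_def)
      then have rhs: "diag (flip_sign A) (shear \<phi> A (gen i)) = gadd (gsmult (-1) (gen i)) (P i)"
        using ghom_gadd[OF hom(2) gen_in_carrier[OF i] P_in_carrier[OF iN]] shear_gen[OF i] True
        by (simp add: diag_gen flip_sign_def)
      show ?thesis
        unfolding comp_def lhs rhs by (simp add: fun_eq_iff gadd_def gsmult_def)
    next
      case False
      then show ?thesis
        using flips i shear_gen[OF i] by (simp add: flips_def diag_gen flip_sign_def gsmult_def)
    qed
  qed
  then show ?thesis
    by simp
qed

end

lemma flip_group_z2_iso_sstar:
  assumes \<phi>: "\<phi> \<in> flip_group P N" "flips P \<phi> A" "A \<subseteq> {1..N}"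
  shows "z2_iso (phi_deg0 \<phi>) (phi_deg1 \<phi>) (sstar_deg0 (card A)) (sstar_deg1 (card A))"
proof -
  obtain p where p: "bij p" "p 0 = 0" "p ` A = {1..card A}"
    using exists_perm_onto_initial_segment[OF \<phi>(3)] by blast
  define \<psi> where "\<psi> = pmap p \<circ> shear \<phi> A"
  have "grass_aut \<psi>"
    unfolding \<psi>_def by (intro grass_aut_comp grass_aut_pmap[OF p(1,2)] grass_aut_shear[OF \<phi>])
  moreover have "\<phi> x \<in> grass_carrier" if "x \<in> grass_carrier" for x
    using \<phi>(1) that by (auto elim: flip_group_memE intro: ghom_in_carrier)
  moreover have "\<psi> (\<phi> x) = diag (flip_sign {1..card A}) (\<psi> x)" if "x \<in> grass_carrier" for x
  proof -
    have "flip_sign (p ` A) (p i) = (flip_sign A i :: 'a)" for i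
      using bij_is_inj[OF p(1)] by (simp add: flip_sign_def inj_image_mem_iff)
    then show ?thesis
      unfolding \<psi>_def comp_def shear_conj[OF \<phi> that] p(3)[symmetric]
      by (rule pmap_diag[OF p(1,2)])
  qed
  ultimately show ?thesis
    unfolding sstar_deg0_eq_phi_deg0 sstar_deg1_eq_phi_deg1 by (rule z2_iso_if_conjugate)
qed

end

theorem mainTheorem7:
  fixes T :: "nat \<Rightarrow> ('a::field_char_0) grass \<Rightarrow> 'a grass"
    and P :: "nat \<Rightarrow> 'a grass" and N :: nat
  assumes "\<And>j. j \<in> {1..N} \<Longrightarrow> triangular_aut j (T j) (P j)"
    and "\<And>j. j \<in> {1..N} \<Longrightarrow> P j \<in> grass_avoid N \<inter> grass_odd"
  shows "(\<forall>\<phi>\<in>tau_group T N. \<forall>\<psi>\<in>tau_group T N.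
            compose grass_carrier \<phi> \<psi> = compose grass_carrier \<psi> \<phi>)
       \<and> card (tau_group T N) = 2 ^ N
       \<and> (\<forall>\<phi>\<in>tau_group T N. compose grass_carrier \<phi> \<phi> = (\<lambda>x\<in>grass_carrier. x))
       \<and> (\<forall>js. distinct js \<and> set js \<subseteq> {1..N} \<longrightarrow>
            z2_iso (phi_deg0 (comp_list T js)) (phi_deg1 (comp_list T js))
                   (sstar_deg0 (length js)) (sstar_deg1 (length js)))"
proof -
  interpret triangular_family T P N
    using assms by unfold_locales blast+
  have "z2_iso (phi_deg0 (comp_list T js)) (phi_deg1 (comp_list T js))
      (sstar_deg0 (length js)) (sstar_deg1 (length js))"
    if "distinct js" "set js \<subseteq> {1..N}" for js
    using flip_group_z2_iso_sstar comp_list_flips[OF that] that distinct_card[OF that(1)] by metis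
  then show ?thesis
    using tau_group_subset_flip_group flip_group_commute flip_group_square card_tau_group
    by (meson subsetD)
qed

end
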